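(* Let $(\mathcal A;\mathcal E)$ be an exact category with exact coproducts. Then the coproduct, in the arrow category with its exact structure $\mathrm{Arr}(\mathcal E)$, of any set of ME-conflations of arrows is an ME-conflation.
   Context: An exact category $(\mathcal A;\mathcal E)$ is an additive category with a class of conflations satisfying the Quillen–Keller axioms; it has exact coproducts if set-indexed coproducts exist and coproducts of conflations are conflations. The arrow category $\mathrm{Arr}(\mathcal A)$ has as objects the morphisms $a:A_0\to A_1$ of $\mathcal A$ and as morphisms $a\to b$ the pairs $(f_0,f_1)$ with $bf_0=f_1a$. Its exact structure $\mathrm{Arr}(\mathcal E)$ consists of the sequences $b\to c\to a$ given by a morphism of conflations from $B_0\to C_0\to A_0$ to $B_1\to C_1\to A_1$ with vertical components $b,c,a$. Such a conflation of arrows is ME (mono-epi) if there is a conflation $B_0\to C\to A_1$ and a factorization $c=c_2c_1$ such that $(1_{B_0},c_1,a)$ is a morphism of conflations from $B_0\to C_0\to A_0$ to $B_0\to C\to A_1$ and $(b,c_2,1_{A_1})$ is a morphism of conflations from $B_0\to C\to A_1$ to $B_1\to C_1\to A_1$. *)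

theory Defs
  imports Main
begin

text \<open>Cmp g f is the composite "g after f". Pls, Zro, Ngt give the abelian group
  structure on hom-sets (Zro a b is the zero morphism a to b).\<close>

record ('o, 'm) addcat =
  Obj :: "'o set"
  Mor :: "'m set"
  Src :: "'m \<Rightarrow> 'o"
  Tgt :: "'m \<Rightarrow> 'o"
  Idn :: "'o \<Rightarrow> 'm"
  Cmp :: "'m \<Rightarrow> 'm \<Rightarrow> 'm"
  Pls :: "'m \<Rightarrow> 'm \<Rightarrow> 'm"
  Zro :: "'o \<Rightarrow> 'o \<Rightarrow> 'm"
  Ngt :: "'m \<Rightarrow> 'm"

definition hom :: "('o, 'm, 'x) addcat_scheme \<Rightarrow> 'o \<Rightarrow> 'o \<Rightarrow> 'm set" where
  "hom C a b = {f \<in> Mor C. Src C f = a \<and> Tgt C f = b}"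

definition is_category :: "('o, 'm, 'x) addcat_scheme \<Rightarrow> bool" where
  "is_category C \<longleftrightarrow>
     (\<forall>f \<in> Mor C. Src C f \<in> Obj C \<and> Tgt C f \<in> Obj C) \<and>
     (\<forall>a \<in> Obj C. Idn C a \<in> hom C a a) \<and>
     (\<forall>f \<in> Mor C. \<forall>g \<in> Mor C. Tgt C f = Src C g \<longrightarrow>
        Cmp C g f \<in> hom C (Src C f) (Tgt C g)) \<and>
     (\<forall>f \<in> Mor C. Cmp C (Idn C (Tgt C f)) f = f \<and> Cmp C f (Idn C (Src C f)) = f) \<and>
     (\<forall>f \<in> Mor C. \<forall>g \<in> Mor C. \<forall>h \<in> Mor C.
        Tgt C f = Src C g \<longrightarrow> Tgt C g = Src C h \<longrightarrow>
        Cmp C h (Cmp C g f) = Cmp C (Cmp C h g) f)"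

definition is_preadditive :: "('o, 'm, 'x) addcat_scheme \<Rightarrow> bool" where
  "is_preadditive C \<longleftrightarrow> is_category C \<and>
     (\<forall>a \<in> Obj C. \<forall>b \<in> Obj C.
        Zro C a b \<in> hom C a b \<and>
        (\<forall>f \<in> hom C a b. \<forall>g \<in> hom C a b. Pls C f g \<in> hom C a b) \<and>
        (\<forall>f \<in> hom C a b. Ngt C f \<in> hom C a b) \<and>
        (\<forall>f \<in> hom C a b. \<forall>g \<in> hom C a b. \<forall>h \<in> hom C a b.
           Pls C (Pls C f g) h = Pls C f (Pls C g h)) \<and>
        (\<forall>f \<in> hom C a b. \<forall>g \<in> hom C a b. Pls C f g = Pls C g f) \<and>
        (\<forall>f \<in> hom C a b. Pls C f (Zro C a b) = f) \<and>
        (\<forall>f \<in> hom C a b. Pls C f (Ngt C f) = Zro C a b)) \<and>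
     (\<forall>a \<in> Obj C. \<forall>b \<in> Obj C. \<forall>c \<in> Obj C.
        (\<forall>f \<in> hom C a b. \<forall>g \<in> hom C a b. \<forall>h \<in> hom C b c.
           Cmp C h (Pls C f g) = Pls C (Cmp C h f) (Cmp C h g)) \<and>
        (\<forall>f \<in> hom C a b. \<forall>g \<in> hom C b c. \<forall>h \<in> hom C b c.
           Cmp C (Pls C g h) f = Pls C (Cmp C g f) (Cmp C h f)))"

definition is_additive :: "('o, 'm, 'x) addcat_scheme \<Rightarrow> bool" where
  "is_additive C \<longleftrightarrow> is_preadditive C \<and>
     (\<exists>z \<in> Obj C. Idn C z = Zro C z z) \<and>
     (\<forall>a \<in> Obj C. \<forall>b \<in> Obj C. \<exists>p \<in> Obj C. \<exists>i1 i2 p1 p2.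
        i1 \<in> hom C a p \<and> i2 \<in> hom C b p \<and> p1 \<in> hom C p a \<and> p2 \<in> hom C p b \<and>
        Cmp C p1 i1 = Idn C a \<and> Cmp C p2 i2 = Idn C b \<and>
        Cmp C p2 i1 = Zro C a b \<and> Cmp C p1 i2 = Zro C b a \<and>
        Pls C (Cmp C i1 p1) (Cmp C i2 p2) = Idn C p)"

definition is_iso :: "('o, 'm, 'x) addcat_scheme \<Rightarrow> 'm \<Rightarrow> bool" where
  "is_iso C f \<longleftrightarrow> f \<in> Mor C \<and> (\<exists>g \<in> hom C (Tgt C f) (Src C f).
      Cmp C g f = Idn C (Src C f) \<and> Cmp C f g = Idn C (Tgt C f))"

definition is_kernel :: "('o, 'm, 'x) addcat_scheme \<Rightarrow> 'm \<Rightarrow> 'm \<Rightarrow> bool" where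
  "is_kernel C i d \<longleftrightarrow> i \<in> Mor C \<and> d \<in> Mor C \<and> Tgt C i = Src C d \<and>
     Cmp C d i = Zro C (Src C i) (Tgt C d) \<and>
     (\<forall>x \<in> Obj C. \<forall>f \<in> hom C x (Src C d). Cmp C d f = Zro C x (Tgt C d) \<longrightarrow>
        (\<exists>!g. g \<in> hom C x (Src C i) \<and> Cmp C i g = f))"

definition is_cokernel :: "('o, 'm, 'x) addcat_scheme \<Rightarrow> 'm \<Rightarrow> 'm \<Rightarrow> bool" where
  "is_cokernel C d i \<longleftrightarrow> i \<in> Mor C \<and> d \<in> Mor C \<and> Tgt C i = Src C d \<and>
     Cmp C d i = Zro C (Src C i) (Tgt C d) \<and>
     (\<forall>y \<in> Obj C. \<forall>f \<in> hom C (Tgt C i) y. Cmp C f i = Zro C (Src C i) y \<longrightarrow>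
        (\<exists>!g. g \<in> hom C (Tgt C d) y \<and> Cmp C g d = f))"

definition is_kernel_cokernel_pair :: "('o, 'm, 'x) addcat_scheme \<Rightarrow> 'm \<Rightarrow> 'm \<Rightarrow> bool" where
  "is_kernel_cokernel_pair C i d \<longleftrightarrow> is_kernel C i d \<and> is_cokernel C d i"

text \<open>Commutative square  g' after f = f' after g  (f : A -> B, g : A -> C,
  f' : C -> P, g' : B -> P) that is a pushout.\<close>

definition is_pushout :: "('o, 'm, 'x) addcat_scheme \<Rightarrow> 'm \<Rightarrow> 'm \<Rightarrow> 'm \<Rightarrow> 'm \<Rightarrow> bool" where
  "is_pushout C f g f' g' \<longleftrightarrow>
     f \<in> Mor C \<and> g \<in> Mor C \<and> f' \<in> Mor C \<and> g' \<in> Mor C \<and>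
     Src C f = Src C g \<and> Src C f' = Tgt C g \<and> Src C g' = Tgt C f \<and> Tgt C f' = Tgt C g' \<and>
     Cmp C g' f = Cmp C f' g \<and>
     (\<forall>x \<in> Obj C. \<forall>h \<in> hom C (Tgt C f) x. \<forall>k \<in> hom C (Tgt C g) x.
        Cmp C h f = Cmp C k g \<longrightarrow>
        (\<exists>!u. u \<in> hom C (Tgt C f') x \<and> Cmp C u g' = h \<and> Cmp C u f' = k))"

text \<open>Commutative square  f after g' = g after f'  (f : B -> D, g : C -> D,
  f' : P -> C, g' : P -> B) that is a pullback.\<close>

definition is_pullback :: "('o, 'm, 'x) addcat_scheme \<Rightarrow> 'm \<Rightarrow> 'm \<Rightarrow> 'm \<Rightarrow> 'm \<Rightarrow> bool" where
  "is_pullback C f g f' g' \<longleftrightarrow>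
     f \<in> Mor C \<and> g \<in> Mor C \<and> f' \<in> Mor C \<and> g' \<in> Mor C \<and>
     Tgt C f = Tgt C g \<and> Tgt C f' = Src C g \<and> Tgt C g' = Src C f \<and> Src C f' = Src C g' \<and>
     Cmp C f g' = Cmp C g f' \<and>
     (\<forall>x \<in> Obj C. \<forall>h \<in> hom C x (Src C f). \<forall>k \<in> hom C x (Src C g).
        Cmp C f h = Cmp C g k \<longrightarrow>
        (\<exists>!u. u \<in> hom C x (Src C f') \<and> Cmp C g' u = h \<and> Cmp C f' u = k))"

section \<open>Exact categories (Quillen--Keller axioms, as in Buehler)\<close>

definition inflation :: "('o, 'm, 'x) addcat_scheme \<Rightarrow> ('m \<times> 'm) set \<Rightarrow> 'm \<Rightarrow> bool" where
  "inflation C E i \<longleftrightarrow> (\<exists>d. (i, d) \<in> E)"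

definition deflation :: "('o, 'm, 'x) addcat_scheme \<Rightarrow> ('m \<times> 'm) set \<Rightarrow> 'm \<Rightarrow> bool" where
  "deflation C E d \<longleftrightarrow> (\<exists>i. (i, d) \<in> E)"

text \<open>Morphism of sequences (f, g, h) from  A -i-> B -d-> C  to  A' -i'-> B' -d'-> C'.\<close>

definition seq_morphism ::
  "('o, 'm, 'x) addcat_scheme \<Rightarrow> 'm \<times> 'm \<Rightarrow> 'm \<times> 'm \<Rightarrow> 'm \<Rightarrow> 'm \<Rightarrow> 'm \<Rightarrow> bool" where
  "seq_morphism C s s' f g h \<longleftrightarrow>
     (case s of (i, d) \<Rightarrow> case s' of (i', d') \<Rightarrow>
       f \<in> hom C (Src C i) (Src C i') \<and> g \<in> hom C (Tgt C i) (Tgt C i') \<and>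
       h \<in> hom C (Tgt C d) (Tgt C d') \<and>
       Cmp C i' f = Cmp C g i \<and> Cmp C d' g = Cmp C h d)"

definition is_exact_category :: "('o, 'm, 'x) addcat_scheme \<Rightarrow> ('m \<times> 'm) set \<Rightarrow> bool" where
  "is_exact_category C E \<longleftrightarrow> is_additive C \<and>
     \<comment> \<open>conflations are kernel-cokernel pairs\<close>
     (\<forall>(i, d) \<in> E. is_kernel_cokernel_pair C i d) \<and>
     \<comment> \<open>closed under isomorphisms of kernel-cokernel pairs\<close>
     (\<forall>i d i' d' f g h. (i, d) \<in> E \<longrightarrow> is_kernel_cokernel_pair C i' d' \<longrightarrow>
        seq_morphism C (i, d) (i', d') f g h \<longrightarrow> is_iso C f \<longrightarrow> is_iso C g \<longrightarrow> is_iso C h \<longrightarrow>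
        (i', d') \<in> E) \<and>
     \<comment> \<open>[E0], [E0op]\<close>
     (\<forall>a \<in> Obj C. deflation C E (Idn C a)) \<and>
     (\<forall>a \<in> Obj C. inflation C E (Idn C a)) \<and>
     \<comment> \<open>[E1], [E1op]\<close>
     (\<forall>p q. deflation C E p \<longrightarrow> deflation C E q \<longrightarrow> Tgt C p = Src C q \<longrightarrow>
        deflation C E (Cmp C q p)) \<and>
     (\<forall>i j. inflation C E i \<longrightarrow> inflation C E j \<longrightarrow> Tgt C i = Src C j \<longrightarrow>
        inflation C E (Cmp C j i)) \<and>
     \<comment> \<open>[E2]: pushouts of inflations along arbitrary morphisms exist and are inflations\<close>
     (\<forall>i g. inflation C E i \<longrightarrow> g \<in> Mor C \<longrightarrow> Src C g = Src C i \<longrightarrow>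
        (\<exists>i' g'. is_pushout C i g i' g' \<and> inflation C E i')) \<and>
     \<comment> \<open>[E2op]: pullbacks of deflations along arbitrary morphisms exist and are deflations\<close>
     (\<forall>p g. deflation C E p \<longrightarrow> g \<in> Mor C \<longrightarrow> Tgt C g = Tgt C p \<longrightarrow>
        (\<exists>p' g'. is_pullback C p g p' g' \<and> deflation C E p'))"

definition is_coproduct ::
  "('o, 'm, 'x) addcat_scheme \<Rightarrow> 'i set \<Rightarrow> ('i \<Rightarrow> 'o) \<Rightarrow> 'o \<Rightarrow> ('i \<Rightarrow> 'm) \<Rightarrow> bool" where
  "is_coproduct C I A S \<iota> \<longleftrightarrow> S \<in> Obj C \<and> (\<forall>k \<in> I. \<iota> k \<in> hom C (A k) S) \<and>
     (\<forall>x \<in> Obj C. \<forall>f. (\<forall>k \<in> I. f k \<in> hom C (A k) x) \<longrightarrow>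
        (\<exists>!g. g \<in> hom C S x \<and> (\<forall>k \<in> I. Cmp C g (\<iota> k) = f k)))"

text \<open>(U, V) : SB -> SC -> SA is the coproduct of the family of sequences
  (u k, v k), computed with the coproducts (SB, iB), (SC, iC), (SA, iA).\<close>

definition is_coproduct_of_seqs ::
  "('o, 'm, 'x) addcat_scheme \<Rightarrow> 'i set \<Rightarrow> ('i \<Rightarrow> 'm) \<Rightarrow> ('i \<Rightarrow> 'm) \<Rightarrow>
   'o \<Rightarrow> ('i \<Rightarrow> 'm) \<Rightarrow> 'o \<Rightarrow> ('i \<Rightarrow> 'm) \<Rightarrow> 'o \<Rightarrow> ('i \<Rightarrow> 'm) \<Rightarrow> 'm \<Rightarrow> 'm \<Rightarrow> bool" where
  "is_coproduct_of_seqs C I u v SB iB SC iC SA iA U V \<longleftrightarrow>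
     (\<forall>k \<in> I. u k \<in> Mor C \<and> v k \<in> Mor C \<and> Tgt C (u k) = Src C (v k)) \<and>
     is_coproduct C I (\<lambda>k. Src C (u k)) SB iB \<and>
     is_coproduct C I (\<lambda>k. Tgt C (u k)) SC iC \<and>
     is_coproduct C I (\<lambda>k. Tgt C (v k)) SA iA \<and>
     U \<in> hom C SB SC \<and> V \<in> hom C SC SA \<and>
     (\<forall>k \<in> I. Cmp C U (iB k) = Cmp C (iC k) (u k) \<and> Cmp C V (iC k) = Cmp C (iA k) (v k))"

text \<open>Exact coproducts, for families indexed by subsets of the type 'i:
  all such coproducts exist and coproducts of conflations are conflations.\<close>

definition has_exact_coproducts ::
  "('o, 'm, 'x) addcat_scheme \<Rightarrow> ('m \<times> 'm) set \<Rightarrow> 'i itself \<Rightarrow> bool" where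
  "has_exact_coproducts C E (_ :: 'i itself) \<longleftrightarrow>
     (\<forall>(I :: 'i set) A. (\<forall>k \<in> I. A k \<in> Obj C) \<longrightarrow> (\<exists>S \<iota>. is_coproduct C I A S \<iota>)) \<and>
     (\<forall>(I :: 'i set) u v SB iB SC iC SA iA U V.
        (\<forall>k \<in> I. (u k, v k) \<in> E) \<longrightarrow>
        is_coproduct_of_seqs C I u v SB iB SC iC SA iA U V \<longrightarrow> (U, V) \<in> E)"

section \<open>The arrow category\<close>

text \<open>Objects of Arr(C) are morphisms of C. A morphism a -> b of Arr(C) is encoded
  as the quadruple (a, b, f0, f1) with  b f0 = f1 a.\<close>

type_synonym 'm arrmor = "'m \<times> 'm \<times> 'm \<times> 'm"

definition arr_src :: "'m arrmor \<Rightarrow> 'm" where "arr_src u = fst u"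
definition arr_tgt :: "'m arrmor \<Rightarrow> 'm" where "arr_tgt u = fst (snd u)"
definition arr_c0 :: "'m arrmor \<Rightarrow> 'm" where "arr_c0 u = fst (snd (snd u))"
definition arr_c1 :: "'m arrmor \<Rightarrow> 'm" where "arr_c1 u = snd (snd (snd u))"

definition Arr :: "('o, 'm, 'x) addcat_scheme \<Rightarrow> ('m, 'm arrmor) addcat" where
  "Arr C = \<lparr>
     Obj = Mor C,
     Mor = {(a, b, f0, f1). a \<in> Mor C \<and> b \<in> Mor C \<and>
              f0 \<in> hom C (Src C a) (Src C b) \<and> f1 \<in> hom C (Tgt C a) (Tgt C b) \<and>
              Cmp C b f0 = Cmp C f1 a},
     Src = arr_src,
     Tgt = arr_tgt,
     Idn = (\<lambda>a. (a, a, Idn C (Src C a), Idn C (Tgt C a))),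
     Cmp = (\<lambda>v u. (arr_src u, arr_tgt v, Cmp C (arr_c0 v) (arr_c0 u), Cmp C (arr_c1 v) (arr_c1 u))),
     Pls = (\<lambda>u v. (arr_src u, arr_tgt u, Pls C (arr_c0 u) (arr_c0 v), Pls C (arr_c1 u) (arr_c1 v))),
     Zro = (\<lambda>a b. (a, b, Zro C (Src C a) (Src C b), Zro C (Tgt C a) (Tgt C b))),
     Ngt = (\<lambda>u. (arr_src u, arr_tgt u, Ngt C (arr_c0 u), Ngt C (arr_c1 u))) \<rparr>"

text \<open>The exact structure Arr(E): sequences b -> c -> a in Arr(C) which are morphisms
  of conflations from B0 -> C0 -> A0 to B1 -> C1 -> A1.\<close>

definition ArrE :: "('o, 'm, 'x) addcat_scheme \<Rightarrow> ('m \<times> 'm) set \<Rightarrow> ('m arrmor \<times> 'm arrmor) set" where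
  "ArrE C E = {(u, v). u \<in> Mor (Arr C) \<and> v \<in> Mor (Arr C) \<and> arr_tgt u = arr_src v \<and>
       (arr_c0 u, arr_c0 v) \<in> E \<and> (arr_c1 u, arr_c1 v) \<in> E}"

definition is_ME :: "('o, 'm, 'x) addcat_scheme \<Rightarrow> ('m \<times> 'm) set \<Rightarrow> 'm arrmor \<Rightarrow> 'm arrmor \<Rightarrow> bool" where
  "is_ME C E u v \<longleftrightarrow>
     (let b = arr_src u; c = arr_tgt u; a = arr_tgt v in
      \<exists>i p c1 c2. (i, p) \<in> E \<and> Src C i = Src C b \<and> Tgt C p = Tgt C a \<and>
        c1 \<in> hom C (Src C c) (Tgt C i) \<and> c2 \<in> hom C (Tgt C i) (Tgt C c) \<and>
        c = Cmp C c2 c1 \<and>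
        seq_morphism C (arr_c0 u, arr_c0 v) (i, p) (Idn C (Src C b)) c1 a \<and>
        seq_morphism C (i, p) (arr_c1 u, arr_c1 v) b c2 (Idn C (Tgt C a)))"

definition is_ME_conflation ::
  "('o, 'm, 'x) addcat_scheme \<Rightarrow> ('m \<times> 'm) set \<Rightarrow> 'm arrmor \<Rightarrow> 'm arrmor \<Rightarrow> bool" where
  "is_ME_conflation C E u v \<longleftrightarrow> (u, v) \<in> ArrE C E \<and> is_ME C E u v"

end

theory Submission
  imports Defs
begin

(* Coproducts in the arrow category are computed componentwise: the source and target functors
   Arr C -> C have right adjoints, x |-> (x -> 0) and x |-> 1_x, so they preserve coproducts.
   Hence both rows of a coproduct of conflations of arrows are coproducts of conflations of C,
   and so conflations.  For the ME condition, take the coproduct X of the middle objects of the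
   given factorizations B0 -> X_k -> A1 together with the maps it induces.  Every identity
   required of this glued data becomes, after precomposition with a coproduct injection, one of
   the given identities; so it holds by the uniqueness in the universal property. *)

lemma cat_comp_hom:
  assumes "is_category C" "f \<in> hom C a b" "g \<in> hom C b c"
  shows "Cmp C g f \<in> hom C a c"
  using assms unfolding is_category_def hom_def by auto

lemma cat_assoc:
  assumes "is_category C" "f \<in> hom C a b" "g \<in> hom C b c" "h \<in> hom C c d"
  shows "Cmp C h (Cmp C g f) = Cmp C (Cmp C h g) f"
  using assms unfolding is_category_def hom_def by auto

lemma cat_id_left:
  assumes "is_category C" "f \<in> hom C a b"
  shows "Cmp C (Idn C b) f = f"
  using assms unfolding is_category_def hom_def by auto

lemma cat_id_right:
  assumes "is_category C" "f \<in> hom C a b"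
  shows "Cmp C f (Idn C a) = f"
  using assms unfolding is_category_def hom_def by auto

lemma cat_id_hom:
  assumes "is_category C" "a \<in> Obj C"
  shows "Idn C a \<in> hom C a a"
  using assms unfolding is_category_def by auto

lemma cat_hom_Obj:
  assumes "is_category C" "f \<in> hom C a b"
  shows "a \<in> Obj C" "b \<in> Obj C"
  using assms unfolding is_category_def hom_def by auto

lemma Mor_hom: "f \<in> Mor C \<Longrightarrow> f \<in> hom C (Src C f) (Tgt C f)"
  unfolding hom_def by auto

lemma exact_category_additive: "is_exact_category C E \<Longrightarrow> is_additive C"
  unfolding is_exact_category_def by (rule conjunct1)

lemma additive_preadditive: "is_additive C \<Longrightarrow> is_preadditive C"
  unfolding is_additive_def by (rule conjunct1)

lemma additive_zero_object:
  assumes "is_additive C" obtains z where "z \<in> Obj C" "Idn C z = Zro C z z"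
  using assms unfolding is_additive_def by blast

lemma preadditive_category: "is_preadditive C \<Longrightarrow> is_category C"
  unfolding is_preadditive_def by blast

lemma preadditive_comp_Pls:
  assumes P: "is_preadditive C" and f: "f \<in> hom C a b" and g: "g \<in> hom C b c" "h \<in> hom C b c"
  shows "Cmp C (Pls C g h) f = Pls C (Cmp C g f) (Cmp C h f)"
proof -
  have cat: "is_category C" using preadditive_category[OF P] .
  have "a \<in> Obj C" "b \<in> Obj C" "c \<in> Obj C" using cat_hom_Obj[OF cat] f g by blast+
  moreover have "\<forall>a\<in>Obj C. \<forall>b\<in>Obj C. \<forall>c\<in>Obj C. \<forall>f\<in>hom C a b. \<forall>g\<in>hom C b c. \<forall>h\<in>hom C b c.
           Cmp C (Pls C g h) f = Pls C (Cmp C g f) (Cmp C h f)"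
    using P unfolding is_preadditive_def by (elim conjE) (simp add: Ball_def)
  ultimately show ?thesis using f g by blast
qed

lemma zero_hom: "is_preadditive C \<Longrightarrow> a \<in> Obj C \<Longrightarrow> b \<in> Obj C \<Longrightarrow> Zro C a b \<in> hom C a b"
  unfolding is_preadditive_def by blast

lemma zero_comp:
  assumes P: "is_preadditive C" and f: "f \<in> hom C a b" and c: "c \<in> Obj C"
  shows "Cmp C (Zro C b c) f = Zro C a c"
proof -
  have cat: "is_category C" using preadditive_category[OF P] .
  have a: "a \<in> Obj C" and b: "b \<in> Obj C" using cat_hom_Obj[OF cat f] by auto
  define h where "h = Cmp C (Zro C b c) f"
  have Z: "Zro C b c \<in> hom C b c" using zero_hom[OF P b c] .
  then have ZZ: "Pls C (Zro C b c) (Zro C b c) = Zro C b c"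
    using P b c unfolding is_preadditive_def by blast
  have h: "h \<in> hom C a c"
    unfolding h_def using cat_comp_hom[OF cat f Z] .
  have "Cmp C (Pls C (Zro C b c) (Zro C b c)) f = Pls C h h"
    unfolding h_def using preadditive_comp_Pls[OF P f Z Z] .
  then have hh: "Pls C h h = h" using ZZ h_def by simp
  have assoc: "\<forall>f \<in> hom C a c. \<forall>g \<in> hom C a c. \<forall>h \<in> hom C a c.
           Pls C (Pls C f g) h = Pls C f (Pls C g h)"
    and unit: "\<forall>f \<in> hom C a c. Pls C f (Zro C a c) = f"
    and inv: "\<forall>f \<in> hom C a c. Pls C f (Ngt C f) = Zro C a c"
    and inv_hom: "\<forall>f \<in> hom C a c. Ngt C f \<in> hom C a c"
    using P a c unfolding is_preadditive_def by blast+
  \<comment> \<open>\<open>h = h + h\<close> forces \<open>h = 0\<close> in the abelian group \<open>hom C a c\<close>\<close>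
  have "Zro C a c = Pls C (Pls C h h) (Ngt C h)"
    using h hh inv by simp
  also have "\<dots> = h"
    using h assoc unit inv inv_hom by simp
  finally show ?thesis unfolding h_def by simp
qed

lemma zero_object_hom:
  assumes P: "is_preadditive C" and z: "Idn C z = Zro C z z" and f: "f \<in> hom C y z"
  shows "f = Zro C y z"
proof -
  have cat: "is_category C" using preadditive_category[OF P] .
  have "f = Cmp C (Idn C z) f" using cat_id_left[OF cat f] by simp
  also have "\<dots> = Zro C y z" using z zero_comp[OF P f] cat_hom_Obj(2)[OF cat f] by simp
  finally show ?thesis .
qed

lemma conflation_Mor:
  assumes "is_exact_category C E" "(i, p) \<in> E"
  shows "i \<in> Mor C" "p \<in> Mor C" "Tgt C i = Src C p"
proof -
  have "\<forall>(i, d)\<in>E. is_kernel_cokernel_pair C i d"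
    using assms(1) unfolding is_exact_category_def by (rule conjunct1[OF conjunct2])
  then have "is_kernel_cokernel_pair C i p"
    using assms(2) by blast
  then show "i \<in> Mor C" "p \<in> Mor C" "Tgt C i = Src C p"
    unfolding is_kernel_cokernel_pair_def is_kernel_def by blast+
qed

lemma coproduct_Obj: "is_coproduct C I A S \<iota> \<Longrightarrow> S \<in> Obj C"
  unfolding is_coproduct_def by blast

lemma coproduct_inj_hom: "is_coproduct C I A S \<iota> \<Longrightarrow> k \<in> I \<Longrightarrow> \<iota> k \<in> hom C (A k) S"
  unfolding is_coproduct_def by blast

lemma coproduct_universal:
  assumes "is_coproduct C I A S \<iota>" "x \<in> Obj C" "\<forall>k\<in>I. f k \<in> hom C (A k) x"
  shows "\<exists>!g. g \<in> hom C S x \<and> (\<forall>k\<in>I. Cmp C g (\<iota> k) = f k)"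
proof -
  have "\<forall>x \<in> Obj C. \<forall>f. (\<forall>k \<in> I. f k \<in> hom C (A k) x) \<longrightarrow>
        (\<exists>!g. g \<in> hom C S x \<and> (\<forall>k \<in> I. Cmp C g (\<iota> k) = f k))"
    using assms(1) unfolding is_coproduct_def by (rule conjunct2[OF conjunct2])
  with assms(2,3) show ?thesis by blast
qed

lemma coproduct_hom_eqI:
  assumes cat: "is_category C" and cp: "is_coproduct C I A S \<iota>"
    and g: "g \<in> hom C S x" and g': "g' \<in> hom C S x"
    and eq: "\<forall>k\<in>I. Cmp C g (\<iota> k) = Cmp C g' (\<iota> k)"
  shows "g = g'"
proof -
  have "\<forall>k\<in>I. Cmp C g (\<iota> k) \<in> hom C (A k) x"
    using cat_comp_hom[OF cat coproduct_inj_hom[OF cp] g] by blast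
  then have "\<exists>!h. h \<in> hom C S x \<and> (\<forall>k\<in>I. Cmp C h (\<iota> k) = Cmp C g (\<iota> k))"
    by (rule coproduct_universal[OF cp cat_hom_Obj(2)[OF cat g]])
  then show ?thesis
    using g g' eq by (auto elim!: ex1E)
qed

lemma coproduct_cong:
  assumes cp: "is_coproduct C I A S \<iota>" and eq: "\<And>k. k \<in> I \<Longrightarrow> A k = A' k"
  shows "is_coproduct C I A' S \<iota>"
  unfolding is_coproduct_def
proof (intro conjI ballI allI impI)
  show "S \<in> Obj C" using coproduct_Obj[OF cp] .
  show "\<iota> k \<in> hom C (A' k) S" if "k \<in> I" for k
    using coproduct_inj_hom[OF cp that] eq[OF that] by simp
  show "\<exists>!g. g \<in> hom C S x \<and> (\<forall>k\<in>I. Cmp C g (\<iota> k) = f k)"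
    if "x \<in> Obj C" "\<forall>k\<in>I. f k \<in> hom C (A' k) x" for x f
    using coproduct_universal[OF cp that(1)] that(2) eq by simp
qed

definition is_coproduct_map ::
  "('o, 'm, 'x) addcat_scheme \<Rightarrow> 'i set \<Rightarrow> ('i \<Rightarrow> 'm) \<Rightarrow> ('i \<Rightarrow> 'm) \<Rightarrow> ('i \<Rightarrow> 'm) \<Rightarrow> 'm \<Rightarrow> bool"
  where "is_coproduct_map C I \<iota> \<kappa> f F \<longleftrightarrow> (\<forall>k\<in>I. Cmp C F (\<iota> k) = Cmp C (\<kappa> k) (f k))"

lemma coproduct_map_exists:
  assumes cat: "is_category C" and cp: "is_coproduct C I A S \<iota>" and x: "x \<in> Obj C"
    and f: "\<forall>k\<in>I. f k \<in> hom C (A k) (B k)" and \<kappa>: "\<forall>k\<in>I. \<kappa> k \<in> hom C (B k) x"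
  obtains F where "F \<in> hom C S x" "is_coproduct_map C I \<iota> \<kappa> f F"
proof -
  have "\<forall>k\<in>I. Cmp C (\<kappa> k) (f k) \<in> hom C (A k) x"
    using f \<kappa> cat_comp_hom[OF cat] by blast
  from coproduct_universal[OF cp x this] show ?thesis
    using that unfolding is_coproduct_map_def by blast
qed

lemma coproduct_map_unique:
  assumes cat: "is_category C" and cp: "is_coproduct C I A S \<iota>"
    and F: "F \<in> hom C S x" "is_coproduct_map C I \<iota> \<kappa> f F"
    and F': "F' \<in> hom C S x" "is_coproduct_map C I \<iota> \<kappa> f' F'"
    and eq: "\<forall>k\<in>I. f k = f' k"
  shows "F = F'"
  using coproduct_hom_eqI[OF cat cp F(1) F'(1)] F(2) F'(2) eq
  unfolding is_coproduct_map_def by simp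

lemma coproduct_map_comp:
  assumes cat: "is_category C"
    and \<iota>: "is_coproduct C I A P \<iota>" and \<kappa>: "is_coproduct C I B Q \<kappa>" and \<mu>: "is_coproduct C I D R \<mu>"
    and f: "\<forall>k\<in>I. f k \<in> hom C (A k) (B k)" and g: "\<forall>k\<in>I. g k \<in> hom C (B k) (D k)"
    and F: "F \<in> hom C P Q" "is_coproduct_map C I \<iota> \<kappa> f F"
    and G: "G \<in> hom C Q R" "is_coproduct_map C I \<kappa> \<mu> g G"
  shows "is_coproduct_map C I \<iota> \<mu> (\<lambda>k. Cmp C (g k) (f k)) (Cmp C G F)"
  unfolding is_coproduct_map_def
proof
  fix k assume k: "k \<in> I"
  note \<iota>k = coproduct_inj_hom[OF \<iota> k] and \<kappa>k = coproduct_inj_hom[OF \<kappa> k]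
    and \<mu>k = coproduct_inj_hom[OF \<mu> k]
  have fk: "f k \<in> hom C (A k) (B k)" and gk: "g k \<in> hom C (B k) (D k)" using f g k by auto
  have "Cmp C (Cmp C G F) (\<iota> k) = Cmp C G (Cmp C (\<kappa> k) (f k))"
    using cat_assoc[OF cat \<iota>k F(1) G(1)] F(2) k unfolding is_coproduct_map_def by simp
  also have "\<dots> = Cmp C (Cmp C (\<mu> k) (g k)) (f k)"
    using cat_assoc[OF cat fk \<kappa>k G(1)] G(2) k unfolding is_coproduct_map_def by simp
  also have "\<dots> = Cmp C (\<mu> k) (Cmp C (g k) (f k))"
    using cat_assoc[OF cat fk gk \<mu>k] by simp
  finally show "Cmp C (Cmp C G F) (\<iota> k) = Cmp C (\<mu> k) (Cmp C (g k) (f k))" .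
qed

lemma is_coproduct_of_seqsI:
  assumes u: "\<forall>k\<in>I. u k \<in> hom C (A k) (B k)" and v: "\<forall>k\<in>I. v k \<in> hom C (B k) (D k)"
    and cA: "is_coproduct C I A SA iA" and cB: "is_coproduct C I B SB iB"
    and cD: "is_coproduct C I D SD iD"
    and U: "U \<in> hom C SA SB" "is_coproduct_map C I iA iB u U"
    and V: "V \<in> hom C SB SD" "is_coproduct_map C I iB iD v V"
  shows "is_coproduct_of_seqs C I u v SA iA SB iB SD iD U V"
  unfolding is_coproduct_of_seqs_def
proof (intro conjI)
  show "\<forall>k\<in>I. u k \<in> Mor C \<and> v k \<in> Mor C \<and> Tgt C (u k) = Src C (v k)"
    using u v unfolding hom_def by auto
  show "is_coproduct C I (\<lambda>k. Src C (u k)) SA iA"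
    using u by (intro coproduct_cong[OF cA]) (simp add: hom_def)
  show "is_coproduct C I (\<lambda>k. Tgt C (u k)) SB iB"
    using u by (intro coproduct_cong[OF cB]) (simp add: hom_def)
  show "is_coproduct C I (\<lambda>k. Tgt C (v k)) SD iD"
    using v by (intro coproduct_cong[OF cD]) (simp add: hom_def)
  show "\<forall>k\<in>I. Cmp C U (iA k) = Cmp C (iB k) (u k) \<and> Cmp C V (iB k) = Cmp C (iD k) (v k)"
    using U(2) V(2) unfolding is_coproduct_map_def by blast
qed fact+

lemma exact_coproducts_exist:
  fixes I :: "'i set"
  assumes "has_exact_coproducts C E TYPE('i)" "\<forall>k\<in>I. A k \<in> Obj C"
  obtains S \<iota> where "is_coproduct C I A S \<iota>"
proof -
  have "\<forall>(I :: 'i set) A. (\<forall>k \<in> I. A k \<in> Obj C) \<longrightarrow> (\<exists>S \<iota>. is_coproduct C I A S \<iota>)"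
    using assms(1) unfolding has_exact_coproducts_def by (rule conjunct1)
  with assms(2) that show ?thesis by blast
qed

lemma exact_coproducts_conflation:
  fixes I :: "'i set"
  assumes "has_exact_coproducts C E TYPE('i)" "\<forall>k\<in>I. (u k, v k) \<in> E"
    and "is_coproduct_of_seqs C I u v SB iB SC iC SA iA U V"
  shows "(U, V) \<in> E"
proof -
  have "\<forall>(I :: 'i set) u v SB iB SC iC SA iA U V. (\<forall>k \<in> I. (u k, v k) \<in> E) \<longrightarrow>
        is_coproduct_of_seqs C I u v SB iB SC iC SA iA U V \<longrightarrow> (U, V) \<in> E"
    using assms(1) unfolding has_exact_coproducts_def by (rule conjunct2)
  with assms(2,3) show ?thesis by blast
qed

definition is_functor ::
  "('o, 'm, 'x) addcat_scheme \<Rightarrow> ('p, 'n, 'y) addcat_scheme \<Rightarrow> ('o \<Rightarrow> 'p) \<Rightarrow> ('m \<Rightarrow> 'n) \<Rightarrow> bool"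
  where "is_functor D C Fo F \<longleftrightarrow>
    (\<forall>a \<in> Obj D. Fo a \<in> Obj C \<and> F (Idn D a) = Idn C (Fo a)) \<and>
    (\<forall>a b f. f \<in> hom D a b \<longrightarrow> F f \<in> hom C (Fo a) (Fo b)) \<and>
    (\<forall>a b c f g. f \<in> hom D a b \<longrightarrow> g \<in> hom D b c \<longrightarrow> F (Cmp D g f) = Cmp C (F g) (F f))"

lemma functor_hom: "is_functor D C Fo F \<Longrightarrow> f \<in> hom D a b \<Longrightarrow> F f \<in> hom C (Fo a) (Fo b)"
  unfolding is_functor_def by blast

lemma functor_comp:
  "is_functor D C Fo F \<Longrightarrow> f \<in> hom D a b \<Longrightarrow> g \<in> hom D b c \<Longrightarrow> F (Cmp D g f) = Cmp C (F g) (F f)"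
  unfolding is_functor_def by blast

lemma functor_Obj: "is_functor D C Fo F \<Longrightarrow> a \<in> Obj D \<Longrightarrow> Fo a \<in> Obj C"
  unfolding is_functor_def by blast

lemma left_adjoint_preserves_coproduct:
  assumes D: "is_category D" and F: "is_functor D C Fo F"
    and adjoint: "\<And>x. x \<in> Obj C \<Longrightarrow> \<exists>R \<in> Obj D. \<forall>a \<in> Obj D. bij_betw F (hom D a R) (hom C (Fo a) x)"
    and cp: "is_coproduct D I A S \<iota>"
  shows "is_coproduct C I (\<lambda>k. Fo (A k)) (Fo S) (\<lambda>k. F (\<iota> k))"
  unfolding is_coproduct_def
proof (intro conjI ballI allI impI)
  show "Fo S \<in> Obj C" using functor_Obj[OF F coproduct_Obj[OF cp]] .
  show "F (\<iota> k) \<in> hom C (Fo (A k)) (Fo S)" if "k \<in> I" for k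
    using functor_hom[OF F coproduct_inj_hom[OF cp that]] .
next
  fix x f assume x: "x \<in> Obj C" and f: "\<forall>k\<in>I. f k \<in> hom C (Fo (A k)) x"
  obtain R where R: "R \<in> Obj D" and bij: "\<And>a. a \<in> Obj D \<Longrightarrow> bij_betw F (hom D a R) (hom C (Fo a) x)"
    using adjoint[OF x] by blast
  have A: "A k \<in> Obj D" if "k \<in> I" for k
    using cat_hom_Obj(1)[OF D coproduct_inj_hom[OF cp that]] .
  have "\<forall>k\<in>I. \<exists>h \<in> hom D (A k) R. F h = f k"
    using f bij[OF A] unfolding bij_betw_def by (metis imageE)
  then obtain h where h: "\<forall>k\<in>I. h k \<in> hom D (A k) R \<and> F (h k) = f k"
    by metis
  obtain H where H: "H \<in> hom D S R" "\<forall>k\<in>I. Cmp D H (\<iota> k) = h k"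
    using coproduct_universal[OF cp R] h by blast
  have FH: "Cmp C (F H) (F (\<iota> k)) = f k" if "k \<in> I" for k
    using functor_comp[OF F coproduct_inj_hom[OF cp that] H(1)] H(2) h that by simp
  show "\<exists>!g. g \<in> hom C (Fo S) x \<and> (\<forall>k\<in>I. Cmp C g (F (\<iota> k)) = f k)"
  proof (rule ex1I[of _ "F H"])
    show "F H \<in> hom C (Fo S) x \<and> (\<forall>k\<in>I. Cmp C (F H) (F (\<iota> k)) = f k)"
      using bij_betw_apply[OF bij[OF coproduct_Obj[OF cp]] H(1)] FH by blast
    fix g assume g: "g \<in> hom C (Fo S) x \<and> (\<forall>k\<in>I. Cmp C g (F (\<iota> k)) = f k)"
    then obtain G where G: "G \<in> hom D S R" "F G = g"
      using bij[OF coproduct_Obj[OF cp]] unfolding bij_betw_def by (metis imageE)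
    have "Cmp D G (\<iota> k) = Cmp D H (\<iota> k)" if k: "k \<in> I" for k
    proof (rule inj_onD[OF bij_betw_imp_inj_on[OF bij[OF A[OF k]]]])
      show "F (Cmp D G (\<iota> k)) = F (Cmp D H (\<iota> k))"
        using functor_comp[OF F coproduct_inj_hom[OF cp k]] G H(1) g FH[OF k] k by simp
      show "Cmp D G (\<iota> k) \<in> hom D (A k) R" "Cmp D H (\<iota> k) \<in> hom D (A k) R"
        using cat_comp_hom[OF D coproduct_inj_hom[OF cp k]] G(1) H(1) by blast+
    qed
    then show "g = F H"
      using coproduct_hom_eqI[OF D cp G(1) H(1)] G(2) by simp
  qed
qed

lemma functor_preserves_coproduct_of_seqs:
  assumes F: "is_functor D C Fo F"
    and preserves: "\<And>A S \<iota>. is_coproduct D I A S \<iota> \<Longrightarrow>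
      is_coproduct C I (\<lambda>k. Fo (A k)) (Fo S) (\<lambda>k. F (\<iota> k))"
    and seqs: "is_coproduct_of_seqs D I u v SB iB SC iC SA iA U V"
  shows "is_coproduct_of_seqs C I (\<lambda>k. F (u k)) (\<lambda>k. F (v k)) (Fo SB) (\<lambda>k. F (iB k))
    (Fo SC) (\<lambda>k. F (iC k)) (Fo SA) (\<lambda>k. F (iA k)) (F U) (F V)"
proof -
  note seqs' = seqs[unfolded is_coproduct_of_seqs_def]
  have u: "\<forall>k\<in>I. u k \<in> hom D (Src D (u k)) (Tgt D (u k))"
    and v: "\<forall>k\<in>I. v k \<in> hom D (Tgt D (u k)) (Tgt D (v k))"
    using seqs' Mor_hom by metis+
  have cB: "is_coproduct D I (\<lambda>k. Src D (u k)) SB iB" and cC: "is_coproduct D I (\<lambda>k. Tgt D (u k)) SC iC"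
    and cA: "is_coproduct D I (\<lambda>k. Tgt D (v k)) SA iA"
    and U: "U \<in> hom D SB SC" and V: "V \<in> hom D SC SA"
    using seqs' by blast+
  have "is_coproduct_map C I (\<lambda>k. F (iB k)) (\<lambda>k. F (iC k)) (\<lambda>k. F (u k)) (F U)"
    and "is_coproduct_map C I (\<lambda>k. F (iC k)) (\<lambda>k. F (iA k)) (\<lambda>k. F (v k)) (F V)"
    using seqs' u v U V coproduct_inj_hom[OF cB] coproduct_inj_hom[OF cC] coproduct_inj_hom[OF cA]
    unfolding is_coproduct_map_def by (metis functor_comp[OF F])+
  then show ?thesis
    using u v preserves[OF cB] preserves[OF cC] preserves[OF cA] functor_hom[OF F U] functor_hom[OF F V]
    by (intro is_coproduct_of_seqsI) (auto intro: functor_hom[OF F])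
qed

section \<open>The arrow category\<close>

lemma arr_sel [simp]:
  "arr_src (a, b, f0, f1) = a" "arr_tgt (a, b, f0, f1) = b"
  "arr_c0 (a, b, f0, f1) = f0" "arr_c1 (a, b, f0, f1) = f1"
  by (simp_all add: arr_src_def arr_tgt_def arr_c0_def arr_c1_def)

lemma arrmor_eqI:
  "arr_src x = arr_src y \<Longrightarrow> arr_tgt x = arr_tgt y \<Longrightarrow> arr_c0 x = arr_c0 y \<Longrightarrow>
    arr_c1 x = arr_c1 y \<Longrightarrow> x = y"
  by (cases x; cases y) simp

lemma Arr_simps [simp]:
  "Obj (Arr C) = Mor C" "Src (Arr C) = arr_src" "Tgt (Arr C) = arr_tgt"
  "Idn (Arr C) a = (a, a, Idn C (Src C a), Idn C (Tgt C a))"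
  "Cmp (Arr C) g f = (arr_src f, arr_tgt g, Cmp C (arr_c0 g) (arr_c0 f), Cmp C (arr_c1 g) (arr_c1 f))"
  by (simp_all add: Arr_def)

lemma Arr_hom_iff:
  "x \<in> hom (Arr C) a b \<longleftrightarrow> a \<in> Mor C \<and> b \<in> Mor C \<and> arr_src x = a \<and> arr_tgt x = b \<and>
     arr_c0 x \<in> hom C (Src C a) (Src C b) \<and> arr_c1 x \<in> hom C (Tgt C a) (Tgt C b) \<and>
     Cmp C b (arr_c0 x) = Cmp C (arr_c1 x) a"
  by (cases x) (auto simp: hom_def Arr_def)

lemma Arr_homI:
  assumes "a \<in> Mor C" "b \<in> Mor C" "f0 \<in> hom C (Src C a) (Src C b)"
    "f1 \<in> hom C (Tgt C a) (Tgt C b)" "Cmp C b f0 = Cmp C f1 a"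
  shows "(a, b, f0, f1) \<in> hom (Arr C) a b"
  using assms by (simp add: Arr_hom_iff)

lemma Arr_Mor_hom: "x \<in> Mor (Arr C) \<Longrightarrow> x \<in> hom (Arr C) (arr_src x) (arr_tgt x)"
  using Mor_hom[of x "Arr C"] by simp

lemma Arr_comp_hom:
  assumes cat: "is_category C" and f: "f \<in> hom (Arr C) a b" and g: "g \<in> hom (Arr C) b c"
  shows "Cmp (Arr C) g f \<in> hom (Arr C) a c"
proof -
  have f0: "arr_c0 f \<in> hom C (Src C a) (Src C b)" and f1: "arr_c1 f \<in> hom C (Tgt C a) (Tgt C b)"
    and g0: "arr_c0 g \<in> hom C (Src C b) (Src C c)" and g1: "arr_c1 g \<in> hom C (Tgt C b) (Tgt C c)"
    and a: "a \<in> hom C (Src C a) (Tgt C a)" and b: "b \<in> hom C (Src C b) (Tgt C b)"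
    and c: "c \<in> hom C (Src C c) (Tgt C c)"
    using f g Mor_hom by (auto simp: Arr_hom_iff)
  have "Cmp C c (Cmp C (arr_c0 g) (arr_c0 f)) = Cmp C (Cmp C c (arr_c0 g)) (arr_c0 f)"
    using cat_assoc[OF cat f0 g0 c] .
  also have "\<dots> = Cmp C (arr_c1 g) (Cmp C b (arr_c0 f))"
    using g cat_assoc[OF cat f0 b g1] by (simp add: Arr_hom_iff)
  also have "\<dots> = Cmp C (Cmp C (arr_c1 g) (arr_c1 f)) a"
    using f cat_assoc[OF cat a f1 g1] by (simp add: Arr_hom_iff)
  finally show ?thesis
    using f g cat_comp_hom[OF cat f0 g0] cat_comp_hom[OF cat f1 g1] by (auto simp: Arr_hom_iff)
qed

lemma is_category_Arr:
  assumes cat: "is_category C"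
  shows "is_category (Arr C)"
  unfolding is_category_def
proof (intro conjI ballI impI)
  fix f assume "f \<in> Mor (Arr C)"
  note f = Arr_Mor_hom[OF this]
  then show "Src (Arr C) f \<in> Obj (Arr C)" "Tgt (Arr C) f \<in> Obj (Arr C)"
    by (simp_all add: Arr_hom_iff)
  have "arr_c0 f \<in> hom C (Src C (arr_src f)) (Src C (arr_tgt f))"
    "arr_c1 f \<in> hom C (Tgt C (arr_src f)) (Tgt C (arr_tgt f))"
    using f by (simp_all add: Arr_hom_iff)
  then show "Cmp (Arr C) (Idn (Arr C) (Tgt (Arr C) f)) f = f"
    "Cmp (Arr C) f (Idn (Arr C) (Src (Arr C) f)) = f"
    by (auto intro: arrmor_eqI simp: cat_id_left[OF cat] cat_id_right[OF cat])
  fix g assume "g \<in> Mor (Arr C)"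
  note g = Arr_Mor_hom[OF this]
  show "Tgt (Arr C) f = Src (Arr C) g \<Longrightarrow>
      Cmp (Arr C) g f \<in> hom (Arr C) (Src (Arr C) f) (Tgt (Arr C) g)"
    using Arr_comp_hom[OF cat f] g by simp
  fix h assume "h \<in> Mor (Arr C)"
  note h = Arr_Mor_hom[OF this]
  show "Tgt (Arr C) f = Src (Arr C) g \<Longrightarrow> Tgt (Arr C) g = Src (Arr C) h \<Longrightarrow>
      Cmp (Arr C) h (Cmp (Arr C) g f) = Cmp (Arr C) (Cmp (Arr C) h g) f"
    using f g h by (auto simp: Arr_hom_iff cat_assoc[OF cat])
next
  fix a assume "a \<in> Obj (Arr C)"
  then have a: "a \<in> Mor C" by simp
  note a' = Mor_hom[OF a]
  show "Idn (Arr C) a \<in> hom (Arr C) a a"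
    unfolding Arr_simps(4)
  proof (rule Arr_homI[OF a a])
    show "Idn C (Src C a) \<in> hom C (Src C a) (Src C a)" "Idn C (Tgt C a) \<in> hom C (Tgt C a) (Tgt C a)"
      using cat_id_hom[OF cat] cat_hom_Obj[OF cat a'] by blast+
    show "Cmp C a (Idn C (Src C a)) = Cmp C (Idn C (Tgt C a)) a"
      using cat_id_left[OF cat a'] cat_id_right[OF cat a'] by simp
  qed
qed

lemma is_functor_arr_c0: "is_category C \<Longrightarrow> is_functor (Arr C) C (Src C) arr_c0"
  unfolding is_functor_def by (auto simp: Arr_hom_iff dest: cat_hom_Obj[OF _ Mor_hom])

lemma is_functor_arr_c1: "is_category C \<Longrightarrow> is_functor (Arr C) C (Tgt C) arr_c1"
  unfolding is_functor_def by (auto simp: Arr_hom_iff dest: cat_hom_Obj[OF _ Mor_hom])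

(* The target functor is left adjoint to x |-> Idn C x. *)
lemma is_coproduct_Arr_Tgt:
  assumes cat: "is_category C" and cp: "is_coproduct (Arr C) I A S \<iota>"
  shows "is_coproduct C I (\<lambda>k. Tgt C (A k)) (Tgt C S) (\<lambda>k. arr_c1 (\<iota> k))"
proof (rule left_adjoint_preserves_coproduct[OF is_category_Arr[OF cat] is_functor_arr_c1[OF cat] _ cp])
  fix x assume x: "x \<in> Obj C"
  note idx = cat_id_hom[OF cat x]
  then have idx_Mor: "Idn C x \<in> Mor C" and idx_ends: "Src C (Idn C x) = x" "Tgt C (Idn C x) = x"
    by (simp_all add: hom_def)
  have "bij_betw arr_c1 (hom (Arr C) a (Idn C x)) (hom C (Tgt C a) x)" if a: "a \<in> Mor C" for a
  proof (rule bij_betwI')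
    fix f g assume f: "f \<in> hom (Arr C) a (Idn C x)" and g: "g \<in> hom (Arr C) a (Idn C x)"
    have "arr_c0 h = Cmp C (arr_c1 h) a" if "h \<in> hom (Arr C) a (Idn C x)" for h
      using that cat_id_left[OF cat, of "arr_c0 h" "Src C a" x] by (simp add: Arr_hom_iff idx_ends)
    from this[OF f] this[OF g] f g show "(arr_c1 f = arr_c1 g) = (f = g)"
      by (auto intro: arrmor_eqI simp only: Arr_hom_iff)
  next
    fix f assume "f \<in> hom (Arr C) a (Idn C x)"
    then show "arr_c1 f \<in> hom C (Tgt C a) x"
      by (simp add: Arr_hom_iff idx_ends)
  next
    fix g assume g: "g \<in> hom C (Tgt C a) x"
    have ga: "Cmp C g a \<in> hom C (Src C a) x"
      using cat_comp_hom[OF cat Mor_hom[OF a] g] .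
    have "(a, Idn C x, Cmp C g a, g) \<in> hom (Arr C) a (Idn C x)"
      using a idx_Mor ga g cat_id_left[OF cat ga] by (intro Arr_homI) (simp_all add: idx_ends)
    then show "\<exists>f \<in> hom (Arr C) a (Idn C x). g = arr_c1 f" by force
  qed
  with idx_Mor idx_ends show "\<exists>R \<in> Obj (Arr C). \<forall>a \<in> Obj (Arr C). bij_betw arr_c1 (hom (Arr C) a R) (hom C (Tgt C a) x)"
    by auto
qed

(* The source functor is left adjoint to x |-> (x -> 0). *)
lemma is_coproduct_Arr_Src:
  assumes add: "is_additive C" and cp: "is_coproduct (Arr C) I A S \<iota>"
  shows "is_coproduct C I (\<lambda>k. Src C (A k)) (Src C S) (\<lambda>k. arr_c0 (\<iota> k))"
proof -
  have P: "is_preadditive C" using additive_preadditive[OF add] .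
  have cat: "is_category C" using preadditive_category[OF P] .
  obtain z where z: "z \<in> Obj C" "Idn C z = Zro C z z" using additive_zero_object[OF add] .
  show ?thesis
  proof (rule left_adjoint_preserves_coproduct[OF is_category_Arr[OF cat] is_functor_arr_c0[OF cat] _ cp])
    fix x assume x: "x \<in> Obj C"
    have xz: "Zro C x z \<in> hom C x z" using zero_hom[OF P x z(1)] .
    then have xz_Mor: "Zro C x z \<in> Mor C" and xz_ends: "Src C (Zro C x z) = x" "Tgt C (Zro C x z) = z"
      by (simp_all add: hom_def)
    have "bij_betw arr_c0 (hom (Arr C) a (Zro C x z)) (hom C (Src C a) x)" if a: "a \<in> Mor C" for a
    proof (rule bij_betwI')
      fix f g assume f: "f \<in> hom (Arr C) a (Zro C x z)" and g: "g \<in> hom (Arr C) a (Zro C x z)"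
      have "arr_c1 h = Zro C (Tgt C a) z" if "h \<in> hom (Arr C) a (Zro C x z)" for h
        using that zero_object_hom[OF P z(2), of "arr_c1 h" "Tgt C a"] by (simp add: Arr_hom_iff xz_ends)
      from this[OF f] this[OF g] f g show "(arr_c0 f = arr_c0 g) = (f = g)"
        by (auto intro: arrmor_eqI simp only: Arr_hom_iff)
    next
      fix f assume "f \<in> hom (Arr C) a (Zro C x z)"
      then show "arr_c0 f \<in> hom C (Src C a) x"
        by (simp add: Arr_hom_iff xz_ends)
    next
      fix g assume g: "g \<in> hom C (Src C a) x"
      note a' = Mor_hom[OF a]
      have "(a, Zro C x z, g, Zro C (Tgt C a) z) \<in> hom (Arr C) a (Zro C x z)"
        using a xz_Mor g zero_hom[OF P cat_hom_Obj(2)[OF cat a'] z(1)]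
          zero_comp[OF P g z(1)] zero_comp[OF P a' z(1)]
        by (intro Arr_homI) (simp_all add: xz_ends)
      then show "\<exists>f \<in> hom (Arr C) a (Zro C x z). g = arr_c0 f" by force
    qed
    with xz_Mor xz_ends show "\<exists>R \<in> Obj (Arr C). \<forall>a \<in> Obj (Arr C).
        bij_betw arr_c0 (hom (Arr C) a R) (hom C (Src C a) x)"
      by auto
  qed
qed

section \<open>Coproducts of ME-conflations\<close>

(* A witness of the ME condition with middle object X, the identity components of the two
   morphisms of conflations cancelled. *)
definition ME_factorization ::
  "('o, 'm, 'x) addcat_scheme \<Rightarrow> ('m \<times> 'm) set \<Rightarrow> 'm arrmor \<Rightarrow> 'm arrmor \<Rightarrow>
    'o \<Rightarrow> 'm \<Rightarrow> 'm \<Rightarrow> 'm \<Rightarrow> 'm \<Rightarrow> bool"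
  where "ME_factorization C E u v X i p c1 c2 \<longleftrightarrow>
    (i, p) \<in> E \<and> i \<in> hom C (Src C (arr_src u)) X \<and> p \<in> hom C X (Tgt C (arr_tgt v)) \<and>
    c1 \<in> hom C (Src C (arr_tgt u)) X \<and> c2 \<in> hom C X (Tgt C (arr_tgt u)) \<and>
    arr_tgt u = Cmp C c2 c1 \<and>
    Cmp C c1 (arr_c0 u) = i \<and> Cmp C p c1 = Cmp C (arr_tgt v) (arr_c0 v) \<and>
    Cmp C (arr_c1 u) (arr_src u) = Cmp C c2 i \<and> Cmp C (arr_c1 v) c2 = p"

lemma is_ME_imp_ME_factorization:
  assumes exact: "is_exact_category C E" and ME: "is_ME C E u v"
  shows "\<exists>X i p c1 c2. ME_factorization C E u v X i p c1 c2"
proof -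
  have cat: "is_category C"
    using preadditive_category[OF additive_preadditive[OF exact_category_additive[OF exact]]] .
  obtain i p c1 c2 where E: "(i, p) \<in> E" and i: "Src C i = Src C (arr_src u)"
    and p: "Tgt C p = Tgt C (arr_tgt v)" and c1: "c1 \<in> hom C (Src C (arr_tgt u)) (Tgt C i)"
    and c2: "c2 \<in> hom C (Tgt C i) (Tgt C (arr_tgt u))" and c: "arr_tgt u = Cmp C c2 c1"
    and top: "seq_morphism C (arr_c0 u, arr_c0 v) (i, p) (Idn C (Src C (arr_src u))) c1 (arr_tgt v)"
    and bot: "seq_morphism C (i, p) (arr_c1 u, arr_c1 v) (arr_src u) c2 (Idn C (Tgt C (arr_tgt v)))"
    using ME unfolding is_ME_def Let_def by blast
  have i': "i \<in> hom C (Src C (arr_src u)) (Tgt C i)" and p': "p \<in> hom C (Tgt C i) (Tgt C (arr_tgt v))"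
    using conflation_Mor[OF exact E] i p by (simp_all add: hom_def)
  have "Cmp C c1 (arr_c0 u) = i" "Cmp C p c1 = Cmp C (arr_tgt v) (arr_c0 v)"
    "Cmp C (arr_c1 u) (arr_src u) = Cmp C c2 i" "Cmp C (arr_c1 v) c2 = p"
    using top bot cat_id_right[OF cat i'] cat_id_left[OF cat p'] by (simp_all add: seq_morphism_def)
  with E i' p' c1 c2 c show ?thesis
    unfolding ME_factorization_def by blast
qed

lemma ME_factorization_imp_is_ME:
  assumes cat: "is_category C"
    and u: "u \<in> Mor (Arr C)" and v: "v \<in> Mor (Arr C)" and uv: "arr_tgt u = arr_src v"
    and fac: "ME_factorization C E u v X i p c1 c2"
  shows "is_ME C E u v"
proof -
  have E: "(i, p) \<in> E" and i: "i \<in> hom C (Src C (arr_src u)) X"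
    and p: "p \<in> hom C X (Tgt C (arr_tgt v))" and c1: "c1 \<in> hom C (Src C (arr_tgt u)) X"
    and c2: "c2 \<in> hom C X (Tgt C (arr_tgt u))" and c: "arr_tgt u = Cmp C c2 c1"
    and eqs: "Cmp C c1 (arr_c0 u) = i" "Cmp C p c1 = Cmp C (arr_tgt v) (arr_c0 v)"
      "Cmp C (arr_c1 u) (arr_src u) = Cmp C c2 i" "Cmp C (arr_c1 v) c2 = p"
    using fac unfolding ME_factorization_def by blast+
  have b: "arr_src u \<in> Mor C" and a: "arr_tgt v \<in> Mor C"
    and u0: "arr_c0 u \<in> hom C (Src C (arr_src u)) (Src C (arr_tgt u))"
    and u1: "arr_c1 u \<in> hom C (Tgt C (arr_src u)) (Tgt C (arr_tgt u))"
    and v0: "arr_c0 v \<in> hom C (Src C (arr_tgt u)) (Src C (arr_tgt v))"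
    and v1: "arr_c1 v \<in> hom C (Tgt C (arr_tgt u)) (Tgt C (arr_tgt v))"
    using Arr_Mor_hom[OF u] Arr_Mor_hom[OF v] uv by (simp_all add: Arr_hom_iff)
  have ends: "Src C i = Src C (arr_src u)" "Tgt C i = X" "Tgt C p = Tgt C (arr_tgt v)"
    "Src C (arr_c0 u) = Src C (arr_src u)" "Tgt C (arr_c0 u) = Src C (arr_tgt u)"
    "Tgt C (arr_c0 v) = Src C (arr_tgt v)" "Src C (arr_c1 u) = Tgt C (arr_src u)"
    "Tgt C (arr_c1 u) = Tgt C (arr_tgt u)" "Tgt C (arr_c1 v) = Tgt C (arr_tgt v)"
    using i p u0 u1 v0 v1 by (simp_all add: hom_def)
  have "seq_morphism C (arr_c0 u, arr_c0 v) (i, p) (Idn C (Src C (arr_src u))) c1 (arr_tgt v)"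
    using cat_id_hom[OF cat cat_hom_Obj(1)[OF cat i]] c1 Mor_hom[OF a] cat_id_right[OF cat i] eqs
    unfolding seq_morphism_def by (simp add: ends)
  moreover have "seq_morphism C (i, p) (arr_c1 u, arr_c1 v) (arr_src u) c2 (Idn C (Tgt C (arr_tgt v)))"
    using cat_id_hom[OF cat cat_hom_Obj(2)[OF cat p]] c2 Mor_hom[OF b] cat_id_left[OF cat p] eqs
    unfolding seq_morphism_def by (simp add: ends)
  ultimately show ?thesis
    using E c1 c2 c ends unfolding is_ME_def Let_def by blast
qed

context
  fixes C :: "('o, 'm, 'x) addcat_scheme" and E :: "('m \<times> 'm) set" and I :: "'i set"
    and u v :: "'i \<Rightarrow> 'm arrmor" and SB SC SA :: 'm and iB iC iA :: "'i \<Rightarrow> 'm arrmor"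
    and U V :: "'m arrmor"
  assumes exact: "is_exact_category C E"
    and exact_coproducts: "has_exact_coproducts C E TYPE('i)"
    and seqs: "is_coproduct_of_seqs (Arr C) I u v SB iB SC iC SA iA U V"
begin

private lemma additive: "is_additive C"
  using exact_category_additive[OF exact] .

private lemma cat: "is_category C"
  using preadditive_category[OF additive_preadditive[OF additive]] .

private lemma Arr_data:
  shows u_hom: "\<forall>k\<in>I. u k \<in> hom (Arr C) (arr_src (u k)) (arr_tgt (u k))"
    and v_hom: "\<forall>k\<in>I. v k \<in> hom (Arr C) (arr_tgt (u k)) (arr_tgt (v k))"
    and U_hom: "U \<in> hom (Arr C) SB SC" and V_hom: "V \<in> hom (Arr C) SC SA"
    and cp_SB: "is_coproduct (Arr C) I (\<lambda>k. arr_src (u k)) SB iB"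
    and cp_SC: "is_coproduct (Arr C) I (\<lambda>k. arr_tgt (u k)) SC iC"
    and cp_SA: "is_coproduct (Arr C) I (\<lambda>k. arr_tgt (v k)) SA iA"
proof -
  note seqs' = seqs[unfolded is_coproduct_of_seqs_def Arr_simps]
  then show "\<forall>k\<in>I. u k \<in> hom (Arr C) (arr_src (u k)) (arr_tgt (u k))"
    "\<forall>k\<in>I. v k \<in> hom (Arr C) (arr_tgt (u k)) (arr_tgt (v k))"
    using Arr_Mor_hom by metis+
  from seqs' show "U \<in> hom (Arr C) SB SC" "V \<in> hom (Arr C) SC SA"
    "is_coproduct (Arr C) I (\<lambda>k. arr_src (u k)) SB iB"
    "is_coproduct (Arr C) I (\<lambda>k. arr_tgt (u k)) SC iC"
    "is_coproduct (Arr C) I (\<lambda>k. arr_tgt (v k)) SA iA"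
    by blast+
qed

private lemma seqs_c0:
  "is_coproduct_of_seqs C I (\<lambda>k. arr_c0 (u k)) (\<lambda>k. arr_c0 (v k)) (Src C SB) (\<lambda>k. arr_c0 (iB k))
    (Src C SC) (\<lambda>k. arr_c0 (iC k)) (Src C SA) (\<lambda>k. arr_c0 (iA k)) (arr_c0 U) (arr_c0 V)"
  using functor_preserves_coproduct_of_seqs[OF is_functor_arr_c0[OF cat]
      is_coproduct_Arr_Src[OF additive] seqs] by simp

private lemma seqs_c1:
  "is_coproduct_of_seqs C I (\<lambda>k. arr_c1 (u k)) (\<lambda>k. arr_c1 (v k)) (Tgt C SB) (\<lambda>k. arr_c1 (iB k))
    (Tgt C SC) (\<lambda>k. arr_c1 (iC k)) (Tgt C SA) (\<lambda>k. arr_c1 (iA k)) (arr_c1 U) (arr_c1 V)"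
  using functor_preserves_coproduct_of_seqs[OF is_functor_arr_c1[OF cat]
      is_coproduct_Arr_Tgt[OF cat] seqs] by simp

lemma ArrE_coproduct:
  assumes "\<forall>k\<in>I. (u k, v k) \<in> ArrE C E"
  shows "(U, V) \<in> ArrE C E"
proof -
  have "(arr_c0 U, arr_c0 V) \<in> E" "(arr_c1 U, arr_c1 V) \<in> E"
    using assms exact_coproducts_conflation[OF exact_coproducts _ seqs_c0]
      exact_coproducts_conflation[OF exact_coproducts _ seqs_c1]
    unfolding ArrE_def by auto
  with U_hom V_hom show ?thesis
    unfolding ArrE_def by (auto simp: hom_def)
qed

private lemma component_coproducts:
  shows cp_Src_SB: "is_coproduct C I (\<lambda>k. Src C (arr_src (u k))) (Src C SB) (\<lambda>k. arr_c0 (iB k))"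
    and cp_Src_SC: "is_coproduct C I (\<lambda>k. Src C (arr_tgt (u k))) (Src C SC) (\<lambda>k. arr_c0 (iC k))"
    and cp_Src_SA: "is_coproduct C I (\<lambda>k. Src C (arr_tgt (v k))) (Src C SA) (\<lambda>k. arr_c0 (iA k))"
    and cp_Tgt_SB: "is_coproduct C I (\<lambda>k. Tgt C (arr_src (u k))) (Tgt C SB) (\<lambda>k. arr_c1 (iB k))"
    and cp_Tgt_SC: "is_coproduct C I (\<lambda>k. Tgt C (arr_tgt (u k))) (Tgt C SC) (\<lambda>k. arr_c1 (iC k))"
    and cp_Tgt_SA: "is_coproduct C I (\<lambda>k. Tgt C (arr_tgt (v k))) (Tgt C SA) (\<lambda>k. arr_c1 (iA k))"
  using is_coproduct_Arr_Src[OF additive cp_SB] is_coproduct_Arr_Src[OF additive cp_SC]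
    is_coproduct_Arr_Src[OF additive cp_SA] is_coproduct_Arr_Tgt[OF cat cp_SB]
    is_coproduct_Arr_Tgt[OF cat cp_SC] is_coproduct_Arr_Tgt[OF cat cp_SA]
  by simp_all

private lemma component_homs:
  shows u0_hom: "\<forall>k\<in>I. arr_c0 (u k) \<in> hom C (Src C (arr_src (u k))) (Src C (arr_tgt (u k)))"
    and u1_hom: "\<forall>k\<in>I. arr_c1 (u k) \<in> hom C (Tgt C (arr_src (u k))) (Tgt C (arr_tgt (u k)))"
    and v0_hom: "\<forall>k\<in>I. arr_c0 (v k) \<in> hom C (Src C (arr_tgt (u k))) (Src C (arr_tgt (v k)))"
    and v1_hom: "\<forall>k\<in>I. arr_c1 (v k) \<in> hom C (Tgt C (arr_tgt (u k))) (Tgt C (arr_tgt (v k)))"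
    and b_hom: "\<forall>k\<in>I. arr_src (u k) \<in> hom C (Src C (arr_src (u k))) (Tgt C (arr_src (u k)))"
    and a_hom: "\<forall>k\<in>I. arr_tgt (v k) \<in> hom C (Src C (arr_tgt (v k))) (Tgt C (arr_tgt (v k)))"
    and U0_hom: "arr_c0 U \<in> hom C (Src C SB) (Src C SC)"
    and U1_hom: "arr_c1 U \<in> hom C (Tgt C SB) (Tgt C SC)"
    and V0_hom: "arr_c0 V \<in> hom C (Src C SC) (Src C SA)"
    and V1_hom: "arr_c1 V \<in> hom C (Tgt C SC) (Tgt C SA)"
    and SB_hom: "SB \<in> hom C (Src C SB) (Tgt C SB)"
    and SC_hom: "SC \<in> hom C (Src C SC) (Tgt C SC)"
    and SA_hom: "SA \<in> hom C (Src C SA) (Tgt C SA)"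
  using u_hom v_hom U_hom V_hom by (auto simp: Arr_hom_iff intro: Mor_hom)

private lemma component_maps:
  shows U0_map: "is_coproduct_map C I (\<lambda>k. arr_c0 (iB k)) (\<lambda>k. arr_c0 (iC k)) (\<lambda>k. arr_c0 (u k)) (arr_c0 U)"
    and U1_map: "is_coproduct_map C I (\<lambda>k. arr_c1 (iB k)) (\<lambda>k. arr_c1 (iC k)) (\<lambda>k. arr_c1 (u k)) (arr_c1 U)"
    and V0_map: "is_coproduct_map C I (\<lambda>k. arr_c0 (iC k)) (\<lambda>k. arr_c0 (iA k)) (\<lambda>k. arr_c0 (v k)) (arr_c0 V)"
    and V1_map: "is_coproduct_map C I (\<lambda>k. arr_c1 (iC k)) (\<lambda>k. arr_c1 (iA k)) (\<lambda>k. arr_c1 (v k)) (arr_c1 V)"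
    and SB_map: "is_coproduct_map C I (\<lambda>k. arr_c0 (iB k)) (\<lambda>k. arr_c1 (iB k)) (\<lambda>k. arr_src (u k)) SB"
    and SC_map: "is_coproduct_map C I (\<lambda>k. arr_c0 (iC k)) (\<lambda>k. arr_c1 (iC k)) (\<lambda>k. arr_tgt (u k)) SC"
    and SA_map: "is_coproduct_map C I (\<lambda>k. arr_c0 (iA k)) (\<lambda>k. arr_c1 (iA k)) (\<lambda>k. arr_tgt (v k)) SA"
  using seqs_c0 seqs_c1 coproduct_inj_hom[OF cp_SB] coproduct_inj_hom[OF cp_SC] coproduct_inj_hom[OF cp_SA]
  unfolding is_coproduct_map_def is_coproduct_of_seqs_def by (simp_all add: Arr_hom_iff)

lemma ME_factorization_coproduct:
  assumes fac: "\<forall>k\<in>I. ME_factorization C E (u k) (v k) (X k) (i k) (p k) (c1 k) (c2 k)"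
    and cX: "is_coproduct C I X SX j"
    and BI: "BI \<in> hom C (Src C SB) SX" "is_coproduct_map C I (\<lambda>k. arr_c0 (iB k)) j i BI"
    and BP: "BP \<in> hom C SX (Tgt C SA)" "is_coproduct_map C I j (\<lambda>k. arr_c1 (iA k)) p BP"
    and K1: "K1 \<in> hom C (Src C SC) SX" "is_coproduct_map C I (\<lambda>k. arr_c0 (iC k)) j c1 K1"
    and K2: "K2 \<in> hom C SX (Tgt C SC)" "is_coproduct_map C I j (\<lambda>k. arr_c1 (iC k)) c2 K2"
  shows "ME_factorization C E U V SX BI BP K1 K2"
proof -
  have i: "\<forall>k\<in>I. i k \<in> hom C (Src C (arr_src (u k))) (X k)"
    and p: "\<forall>k\<in>I. p k \<in> hom C (X k) (Tgt C (arr_tgt (v k)))"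
    and c1: "\<forall>k\<in>I. c1 k \<in> hom C (Src C (arr_tgt (u k))) (X k)"
    and c2: "\<forall>k\<in>I. c2 k \<in> hom C (X k) (Tgt C (arr_tgt (u k)))"
    and c: "\<forall>k\<in>I. arr_tgt (u k) = Cmp C (c2 k) (c1 k)"
    and e1: "\<forall>k\<in>I. Cmp C (c1 k) (arr_c0 (u k)) = i k"
    and e2: "\<forall>k\<in>I. Cmp C (p k) (c1 k) = Cmp C (arr_tgt (v k)) (arr_c0 (v k))"
    and e3: "\<forall>k\<in>I. Cmp C (arr_c1 (u k)) (arr_src (u k)) = Cmp C (c2 k) (i k)"
    and e4: "\<forall>k\<in>I. Cmp C (arr_c1 (v k)) (c2 k) = p k"
    using fac unfolding ME_factorization_def by blast+
  have "(BI, BP) \<in> E"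
    using fac exact_coproducts_conflation[OF exact_coproducts _
        is_coproduct_of_seqsI[OF i p cp_Src_SB cX cp_Tgt_SA BI BP]]
    unfolding ME_factorization_def by blast
  moreover have "SC = Cmp C K2 K1"
    using coproduct_map_unique[OF cat cp_Src_SC SC_hom SC_map cat_comp_hom[OF cat K1(1) K2(1)]
        coproduct_map_comp[OF cat cp_Src_SC cX cp_Tgt_SC c1 c2 K1 K2]] c by blast
  moreover have "Cmp C K1 (arr_c0 U) = BI"
    using coproduct_map_unique[OF cat cp_Src_SB cat_comp_hom[OF cat U0_hom K1(1)]
        coproduct_map_comp[OF cat cp_Src_SB cp_Src_SC cX u0_hom c1 U0_hom U0_map K1] BI] e1 by blast
  moreover have "Cmp C BP K1 = Cmp C SA (arr_c0 V)"
    using coproduct_map_unique[OF cat cp_Src_SC cat_comp_hom[OF cat K1(1) BP(1)]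
        coproduct_map_comp[OF cat cp_Src_SC cX cp_Tgt_SA c1 p K1 BP] cat_comp_hom[OF cat V0_hom SA_hom]
        coproduct_map_comp[OF cat cp_Src_SC cp_Src_SA cp_Tgt_SA v0_hom a_hom V0_hom V0_map SA_hom SA_map]] e2
    by blast
  moreover have "Cmp C (arr_c1 U) SB = Cmp C K2 BI"
    using coproduct_map_unique[OF cat cp_Src_SB cat_comp_hom[OF cat SB_hom U1_hom]
        coproduct_map_comp[OF cat cp_Src_SB cp_Tgt_SB cp_Tgt_SC b_hom u1_hom SB_hom SB_map U1_hom U1_map]
        cat_comp_hom[OF cat BI(1) K2(1)] coproduct_map_comp[OF cat cp_Src_SB cX cp_Tgt_SC i c2 BI K2]] e3
    by blast
  moreover have "Cmp C (arr_c1 V) K2 = BP"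
    using coproduct_map_unique[OF cat cX cat_comp_hom[OF cat K2(1) V1_hom]
        coproduct_map_comp[OF cat cX cp_Tgt_SC cp_Tgt_SA c2 v1_hom K2 V1_hom V1_map] BP] e4 by blast
  ultimately show ?thesis
    using U_hom V_hom BI(1) BP(1) K1(1) K2(1) unfolding ME_factorization_def
    by (simp add: Arr_hom_iff)
qed

lemma is_ME_coproduct:
  assumes "\<forall>k\<in>I. is_ME C E (u k) (v k)"
  shows "is_ME C E U V"
proof -
  have "\<forall>k\<in>I. \<exists>X i p c1 c2. ME_factorization C E (u k) (v k) X i p c1 c2"
    using assms is_ME_imp_ME_factorization[OF exact] by blast
  then obtain X i p c1 c2
    where fac: "\<forall>k\<in>I. ME_factorization C E (u k) (v k) (X k) (i k) (p k) (c1 k) (c2 k)"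
    by metis
  have i: "\<forall>k\<in>I. i k \<in> hom C (Src C (arr_src (u k))) (X k)"
    and p: "\<forall>k\<in>I. p k \<in> hom C (X k) (Tgt C (arr_tgt (v k)))"
    and c1: "\<forall>k\<in>I. c1 k \<in> hom C (Src C (arr_tgt (u k))) (X k)"
    and c2: "\<forall>k\<in>I. c2 k \<in> hom C (X k) (Tgt C (arr_tgt (u k)))"
    using fac unfolding ME_factorization_def by blast+
  obtain SX j where cX: "is_coproduct C I X SX j"
    using exact_coproducts_exist[OF exact_coproducts] i cat_hom_Obj(2)[OF cat] by metis
  have SX: "SX \<in> Obj C" and j: "\<forall>k\<in>I. j k \<in> hom C (X k) SX"
    using coproduct_Obj[OF cX] coproduct_inj_hom[OF cX] by blast+
  have SA: "Tgt C SA \<in> Obj C" and SC: "Tgt C SC \<in> Obj C"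
    using cat_hom_Obj(2)[OF cat] SA_hom SC_hom by blast+
  have iC1: "\<forall>k\<in>I. arr_c1 (iC k) \<in> hom C (Tgt C (arr_tgt (u k))) (Tgt C SC)"
    and iA1: "\<forall>k\<in>I. arr_c1 (iA k) \<in> hom C (Tgt C (arr_tgt (v k))) (Tgt C SA)"
    using coproduct_inj_hom[OF cp_Tgt_SC] coproduct_inj_hom[OF cp_Tgt_SA] by blast+
  obtain BI where "BI \<in> hom C (Src C SB) SX" "is_coproduct_map C I (\<lambda>k. arr_c0 (iB k)) j i BI"
    using coproduct_map_exists[OF cat cp_Src_SB SX i j] .
  moreover obtain BP where "BP \<in> hom C SX (Tgt C SA)" "is_coproduct_map C I j (\<lambda>k. arr_c1 (iA k)) p BP"
    using coproduct_map_exists[OF cat cX SA p iA1] .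
  moreover obtain K1 where "K1 \<in> hom C (Src C SC) SX" "is_coproduct_map C I (\<lambda>k. arr_c0 (iC k)) j c1 K1"
    using coproduct_map_exists[OF cat cp_Src_SC SX c1 j] .
  moreover obtain K2 where "K2 \<in> hom C SX (Tgt C SC)" "is_coproduct_map C I j (\<lambda>k. arr_c1 (iC k)) c2 K2"
    using coproduct_map_exists[OF cat cX SC c2 iC1] .
  ultimately have "ME_factorization C E U V SX BI BP K1 K2"
    using ME_factorization_coproduct[OF fac cX] by blast
  moreover have "U \<in> Mor (Arr C)" "V \<in> Mor (Arr C)" "arr_tgt U = arr_src V"
    using U_hom V_hom by (simp_all add: hom_def)
  ultimately show ?thesis
    using ME_factorization_imp_is_ME[OF cat] by blast
qed

end

theorem proposition5p3:
  fixes C :: "('o, 'm) addcat"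
    and E :: "('m \<times> 'm) set"
    and I :: "'i set"
    and u v :: "'i \<Rightarrow> 'm arrmor"
    and SB SC SA :: "'m"
    and iB iC iA :: "'i \<Rightarrow> 'm arrmor"
    and U V :: "'m arrmor"
  assumes "is_exact_category C E"
    and "has_exact_coproducts C E TYPE('i)"
    and "\<forall>k \<in> I. is_ME_conflation C E (u k) (v k)"
    and "is_coproduct_of_seqs (Arr C) I u v SB iB SC iC SA iA U V"
  shows "is_ME_conflation C E U V"
  using ArrE_coproduct[OF assms(1,2,4)] is_ME_coproduct[OF assms(1,2,4)] assms(3)
  unfolding is_ME_conflation_def by blast

end
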